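(* Let $S=\langle T,\Pi,C\rangle$ be a state space and let $(A_i,\psi_i)$, $1\le i\le k$, be abstractions of $S$ forming an additive abstraction system. Then $h_{add}(t^1,g)\le OPT(t^1,t^2)+h_{add}(t^2,g)$ for all $t^1,t^2,g\in T$.
   Context: A state space is a weighted directed graph $S=\langle T,\Pi,C\rangle$ where $T$ is a finite set of states, $\Pi\subseteq T\times T$ is a set of directed edges, and $C:\Pi\to\mathbb{N}=\{0,1,2,\dots\}$. A path from $u$ to $v$ is a sequence of edges $\langle\pi^1,\dots,\pi^n\rangle$ with $\pi^j=(u^{j-1},u^j)\in\Pi$, $u^0=u$, $u^n=v$; its cost is $C(\pi)=\sum_j C(\pi^j)$. $OPT(u,v)$ is the minimum cost of a path from $u$ to $v$ in $S$ (minima over empty sets are $+\infty$). An abstract state space is $A_i=\langle T_i,\Pi_i,C_i,R_i\rangle$ with $T_i$ a set of abstract states, $\Pi_i\subseteq T_i\times T_i$, and edge weights $C_i,R_i:\Pi_i\to\mathbb{N}$ (primary and residual cost), extended additively to paths. An abstraction of $S$ is a pair $(A_i,\psi_i)$ with $\psi_i:T\to T_i$ such that (1) for every $(u,v)\in\Pi$, $(\psi_i(u),\psi_i(v))\in\Pi_i$, and (2) for every $\pi=(u,v)\in\Pi$, $C_i(\pi_i)+R_i(\pi_i)\le C(\pi)$ where $\pi_i=(\psi_i(u),\psi_i(v))$. The system is additive if for every $\pi\in\Pi$, $\sum_{i=1}^k C_i(\pi_i)\le C(\pi)$. Define $C^*_i(x,y)=\min\{C_i(\rho):\rho\text{ a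 path from }x\text{ to }y\text{ in }A_i\}$ and $h_{add}(t,g)=\sum_{i=1}^k C^*_i(\psi_i(t),\psi_i(g))$. *)

theory Defs
  imports Main "HOL-Library.Extended_Nat"
begin

fun is_path :: "('v \<times> 'v) set \<Rightarrow> 'v \<Rightarrow> ('v \<times> 'v) list \<Rightarrow> 'v \<Rightarrow> bool" where
  "is_path E u [] v \<longleftrightarrow> u = v"
| "is_path E u (e # es) v \<longleftrightarrow> e \<in> E \<and> fst e = u \<and> is_path E (snd e) es v"

definition path_cost :: "('v \<times> 'v \<Rightarrow> nat) \<Rightarrow> ('v \<times> 'v) list \<Rightarrow> nat" where
  "path_cost C es = sum_list (map C es)"

text \<open>Minimum cost of a path from u to v (infimum over empty set is \<infinity>).\<close>
definition min_cost :: "('v \<times> 'v) set \<Rightarrow> ('v \<times> 'v \<Rightarrow> nat) \<Rightarrow> 'v \<Rightarrow> 'v \<Rightarrow> enat" where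
  "min_cost E C u v = Inf {enat (path_cost C es) | es. is_path E u es v}"

definition OPT :: "('s \<times> 's) set \<Rightarrow> ('s \<times> 's \<Rightarrow> nat) \<Rightarrow> 's \<Rightarrow> 's \<Rightarrow> enat" where
  "OPT Pi C u v = min_cost Pi C u v"

definition Cstar :: "('a \<times> 'a) set \<Rightarrow> ('a \<times> 'a \<Rightarrow> nat) \<Rightarrow> 'a \<Rightarrow> 'a \<Rightarrow> enat" where
  "Cstar Pii Ci x y = min_cost Pii Ci x y"

definition state_space :: "'s set \<Rightarrow> ('s \<times> 's) set \<Rightarrow> bool" where
  "state_space T Pi \<longleftrightarrow> finite T \<and> Pi \<subseteq> T \<times> T"

definition abstract_state_space :: "'a set \<Rightarrow> ('a \<times> 'a) set \<Rightarrow> bool" where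
  "abstract_state_space Ti Pii \<longleftrightarrow> Pii \<subseteq> Ti \<times> Ti"

definition abstraction ::
  "'s set \<Rightarrow> ('s \<times> 's) set \<Rightarrow> ('s \<times> 's \<Rightarrow> nat) \<Rightarrow>
   'a set \<Rightarrow> ('a \<times> 'a) set \<Rightarrow> ('a \<times> 'a \<Rightarrow> nat) \<Rightarrow> ('a \<times> 'a \<Rightarrow> nat) \<Rightarrow> ('s \<Rightarrow> 'a) \<Rightarrow> bool" where
  "abstraction T Pi C Ti Pii Ci Ri psi \<longleftrightarrow>
     abstract_state_space Ti Pii \<and> psi ` T \<subseteq> Ti \<and>
     (\<forall>(u, v) \<in> Pi. (psi u, psi v) \<in> Pii) \<and>
     (\<forall>(u, v) \<in> Pi. Ci (psi u, psi v) + Ri (psi u, psi v) \<le> C (u, v))"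

definition additive ::
  "nat \<Rightarrow> ('s \<times> 's) set \<Rightarrow> ('s \<times> 's \<Rightarrow> nat) \<Rightarrow> (nat \<Rightarrow> 'a \<times> 'a \<Rightarrow> nat) \<Rightarrow> (nat \<Rightarrow> 's \<Rightarrow> 'a) \<Rightarrow> bool" where
  "additive k Pi C Cs psi \<longleftrightarrow>
     (\<forall>(u, v) \<in> Pi. (\<Sum>i = 1..k. Cs i (psi i u, psi i v)) \<le> C (u, v))"

definition h_add ::
  "nat \<Rightarrow> (nat \<Rightarrow> ('a \<times> 'a) set) \<Rightarrow> (nat \<Rightarrow> 'a \<times> 'a \<Rightarrow> nat) \<Rightarrow> (nat \<Rightarrow> 's \<Rightarrow> 'a) \<Rightarrow> 's \<Rightarrow> 's \<Rightarrow> enat" where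
  "h_add k Pis Cs psi t g = (\<Sum>i = 1..k. Cstar (Pis i) (Cs i) (psi i t) (psi i g))"

end

theory Submission
  imports Defs
begin

text \<open>Project an optimal concrete path from t1 to t2 into every abstraction. Each
  projection is an abstract path from \<open>\<psi>\<^sub>i(t1)\<close> to \<open>\<psi>\<^sub>i(t2)\<close>, so \<open>C\<^sup>*\<^sub>i\<close> satisfies the
  triangle inequality along it; summing over i, additivity bounds the total
  primary cost of the projections by the cost of the concrete path, i.e. by OPT.\<close>

lemma is_path_append:
  "is_path E u p v \<Longrightarrow> is_path E v q w \<Longrightarrow> is_path E u (p @ q) w"
  by (induction p arbitrary: u) auto

lemma is_path_edges_subset: "is_path E u p v \<Longrightarrow> set p \<subseteq> E"
  by (induction p arbitrary: u) auto

lemma is_path_map_prod: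
  assumes "\<forall>(a, b) \<in> E. (f a, f b) \<in> E'" and "is_path E u p v"
  shows "is_path E' (f u) (map (map_prod f f) p) (f v)"
  using assms(2) by (induction p arbitrary: u) (use assms(1) in auto)

lemma path_cost_append: "path_cost C (p @ q) = path_cost C p + path_cost C q"
  by (simp add: path_cost_def)

lemma path_cost_map: "path_cost C (map f p) = path_cost (C \<circ> f) p"
  by (simp add: path_cost_def)

lemma path_cost_sum: "path_cost (\<lambda>e. \<Sum>i\<in>I. D i e) p = (\<Sum>i\<in>I. path_cost (D i) p)"
  by (induction p) (simp_all add: path_cost_def sum.distrib)

lemma path_cost_mono: "(\<And>e. e \<in> set p \<Longrightarrow> C e \<le> D e) \<Longrightarrow> path_cost C p \<le> path_cost D p"
  unfolding path_cost_def by (rule sum_list_mono)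

lemma min_cost_le_path_cost: "is_path E u p v \<Longrightarrow> min_cost E C u v \<le> enat (path_cost C p)"
  unfolding min_cost_def by (rule Inf_lower) blast

lemma min_cost_attained:
  assumes "min_cost E C u v \<noteq> \<infinity>"
  obtains p where "is_path E u p v" and "min_cost E C u v = enat (path_cost C p)"
proof -
  let ?costs = "{enat (path_cost C p) | p. is_path E u p v}"
  have "?costs \<noteq> {}"
    using assms unfolding min_cost_def by (metis Inf_empty top_enat_def)
  then have "Inf ?costs \<in> ?costs"
    unfolding Inf_enat_def by (auto intro: LeastI)
  then show thesis
    using that unfolding min_cost_def by blast
qed

lemma min_cost_triangle_path:
  assumes "is_path E x p y"
  shows "min_cost E C x z \<le> enat (path_cost C p) + min_cost E C y z"
proof (cases "min_cost E C y z = \<infinity>")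
  case False
  then obtain q where q: "is_path E y q z" "min_cost E C y z = enat (path_cost C q)"
    by (rule min_cost_attained)
  have "min_cost E C x z \<le> enat (path_cost C (p @ q))"
    using is_path_append[OF assms q(1)] by (rule min_cost_le_path_cost)
  then show ?thesis
    using q(2) by (simp add: path_cost_append)
qed simp

lemma additive_path_cost:
  assumes "additive k Pi C Cs psi" and "is_path Pi u p v"
  shows "(\<Sum>i = 1..k. path_cost (Cs i) (map (map_prod (psi i) (psi i)) p)) \<le> path_cost C p"
proof -
  have "(\<Sum>i = 1..k. path_cost (Cs i) (map (map_prod (psi i) (psi i)) p))
      = path_cost (\<lambda>e. \<Sum>i = 1..k. (Cs i \<circ> map_prod (psi i) (psi i)) e) p"
    by (simp only: path_cost_map path_cost_sum)
  also have "\<dots> \<le> path_cost C p"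
  proof (rule path_cost_mono)
    fix e assume "e \<in> set p"
    then have "e \<in> Pi"
      using is_path_edges_subset[OF assms(2)] by blast
    then show "(\<Sum>i = 1..k. (Cs i \<circ> map_prod (psi i) (psi i)) e) \<le> C e"
      using assms(1) unfolding additive_def by (cases e) auto
  qed
  finally show ?thesis .
qed

lemma h_add_le_path_cost:
  assumes edges: "\<forall>i \<in> {1..k}. \<forall>(a, b) \<in> Pi. (psi i a, psi i b) \<in> Pis i"
    and "additive k Pi C Cs psi" and path: "is_path Pi t1 p t2"
  shows "h_add k Pis Cs psi t1 g \<le> enat (path_cost C p) + h_add k Pis Cs psi t2 g"
proof -
  define c where "c i = path_cost (Cs i) (map (map_prod (psi i) (psi i)) p)" for i
  have "h_add k Pis Cs psi t1 g
      \<le> (\<Sum>i = 1..k. enat (c i) + Cstar (Pis i) (Cs i) (psi i t2) (psi i g))"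
    unfolding h_add_def Cstar_def c_def
    by (rule sum_mono, rule min_cost_triangle_path, rule is_path_map_prod)
       (use edges path in auto)
  also have "\<dots> = enat (\<Sum>i = 1..k. c i) + h_add k Pis Cs psi t2 g"
    by (simp add: h_add_def sum.distrib flip: of_nat_eq_enat)
  also have "\<dots> \<le> enat (path_cost C p) + h_add k Pis Cs psi t2 g"
    using additive_path_cost[OF assms(2) path] by (simp add: c_def)
  finally show ?thesis .
qed

theorem lemma5:
  fixes T :: "'s set" and Pi :: "('s \<times> 's) set" and C :: "'s \<times> 's \<Rightarrow> nat"
    and k :: nat
    and Ts :: "nat \<Rightarrow> 'a set" and Pis :: "nat \<Rightarrow> ('a \<times> 'a) set"
    and Cs Rs :: "nat \<Rightarrow> 'a \<times> 'a \<Rightarrow> nat" and psi :: "nat \<Rightarrow> 's \<Rightarrow> 'a"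
  assumes "state_space T Pi"
    and "\<forall>i \<in> {1..k}. abstraction T Pi C (Ts i) (Pis i) (Cs i) (Rs i) (psi i)"
    and "additive k Pi C Cs psi"
    and "t1 \<in> T" and "t2 \<in> T" and "g \<in> T"
  shows "h_add k Pis Cs psi t1 g \<le> OPT Pi C t1 t2 + h_add k Pis Cs psi t2 g"
proof (cases "OPT Pi C t1 t2 = \<infinity>")
  case False
  then obtain p where p: "is_path Pi t1 p t2" "OPT Pi C t1 t2 = enat (path_cost C p)"
    unfolding OPT_def by (rule min_cost_attained)
  have "\<forall>i \<in> {1..k}. \<forall>(a, b) \<in> Pi. (psi i a, psi i b) \<in> Pis i"
    using assms(2) unfolding abstraction_def by blast
  from h_add_le_path_cost[OF this assms(3) p(1)] show ?thesis
    unfolding p(2) .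
qed simp

end
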